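(* Let $\mu>0$ and suppose Assumptions A and B below hold. For any given $(\bar{\mathbf{x}},\bar y)\in\mathrm{dom}\,g\times\mathrm{dom}\,h$ and $\eta_y>0$, with $\bar y^+=\mathrm{prox}_{\eta_yh}(\bar y+\eta_ys_y(\bar{\mathbf{x}},\bar y;\boldsymbol\zeta))$, $$2\eta_y\langle\tilde G_y(\bar{\mathbf{x}},\bar y;\boldsymbol\zeta),\bar y-y_*(\bar{\mathbf{x}})\rangle+\eta_y^2\|\tilde G_y(\bar{\mathbf{x}},\bar y;\boldsymbol\zeta)\|^2\le-\eta_y\mu\|\bar y-y_*(\bar{\mathbf{x}})\|^2-\eta_y^2(1-L\eta_y)\|\tilde G_y(\bar{\mathbf{x}},\bar y;\boldsymbol\zeta)\|^2+2\eta_y\langle s_y(\bar{\mathbf{x}},\bar y;\boldsymbol\zeta)-\nabla_yf(\bar{\mathbf{x}},\bar y),\bar y^+-y_*(\bar{\mathbf{x}})\rangle.$$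
   Context: Setting. $\mathcal{X}_i=\mathbb{R}^{n_i}$, $\mathcal{X}=\prod_{i=1}^N\mathcal{X}_i$, $\mathcal{Y}$ finite-dimensional Euclidean; $g(\mathbf{x})=\sum_ig_i(x_i)$; $\mathrm{prox}_\phi(u)=\arg\min_v\phi(v)+\frac12\|v-u\|^2$. Assumption A: $g_i$, $h$ closed convex; $f$ differentiable on an open set containing $\mathrm{dom}\,g\times\mathrm{dom}\,h$, $\nabla f$ $L$-Lipschitz there, $f(\mathbf{x},\cdot)$ $\mu$-strongly concave for each $\mathbf{x}\in\mathrm{dom}\,g$. $y_*(\mathbf{x})=\arg\max_yf(\mathbf{x},y)-h(y)$. Assumption B: unbiased stochastic oracle $\tilde\nabla_yf(\mathbf{x},y;\zeta)$ for $\nabla_yf$ with variance at most $\sigma_y^2$ at every point of $\mathrm{dom}\,g\times\mathrm{dom}\,h$. $\boldsymbol\zeta=[\zeta_j]_{j=1}^{M_y}$ i.i.d. samples, $s_y(\mathbf{x},y;\boldsymbol\zeta)=\frac1{M_y}\sum_j\tilde\nabla_yf(\mathbf{x},y;\zeta_j)$, $\tilde G_y(\mathbf{x},y;\boldsymbol\zeta)=[\mathrm{prox}_{\eta_yh}(y+\eta_ys_y)-y]/\eta_y$. *)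

theory Defs
  imports "HOL-Analysis.Analysis" "HOL-Probability.Probability"
begin

definition edom :: "('a \<Rightarrow> ereal) \<Rightarrow> 'a set" where
  "edom \<phi> = {v. \<phi> v < \<infinity>}"

definition closed_convex_fun :: "('a::real_normed_vector \<Rightarrow> ereal) \<Rightarrow> bool" where
  "closed_convex_fun \<phi> \<longleftrightarrow>
     (\<forall>v. \<phi> v \<noteq> -\<infinity>) \<and> edom \<phi> \<noteq> {} \<and>
     convex {(v, t::real). \<phi> v \<le> ereal t} \<and>
     closed {(v, t::real). \<phi> v \<le> ereal t}"

definition prox :: "('a::real_normed_vector \<Rightarrow> ereal) \<Rightarrow> 'a \<Rightarrow> 'a" where
  "prox \<phi> u = (SOME v. \<forall>w. \<phi> v + ereal ((norm (v - u))\<^sup>2 / 2) \<le> \<phi> w + ereal ((norm (w - u))\<^sup>2 / 2))"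

definition scale_fun :: "real \<Rightarrow> ('a \<Rightarrow> ereal) \<Rightarrow> 'a \<Rightarrow> ereal" where
  "scale_fun \<eta> \<phi> = (\<lambda>v. ereal \<eta> * \<phi> v)"

definition strongly_concave_on :: "real \<Rightarrow> 'a::real_normed_vector set \<Rightarrow> ('a \<Rightarrow> real) \<Rightarrow> bool" where
  "strongly_concave_on \<mu> S F \<longleftrightarrow> convex S \<and>
     (\<forall>a\<in>S. \<forall>b\<in>S. \<forall>t\<in>{0..1}.
        t * F a + (1 - t) * F b + \<mu> / 2 * t * (1 - t) * (norm (a - b))\<^sup>2 \<le> F (t *\<^sub>R a + (1 - t) *\<^sub>R b))"

(* Block structure: coordinates of real^'n are partitioned into blocks indexed by 'k via blk;
   x_i is the i-th block of x (embedded with zeros elsewhere). *)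
definition block_part :: "('n \<Rightarrow> 'k) \<Rightarrow> 'k \<Rightarrow> real^'n \<Rightarrow> real^'n" where
  "block_part blk i x = (\<chi> j. if blk j = i then x $ j else 0)"

definition block_sum :: "('n \<Rightarrow> 'k::finite) \<Rightarrow> ('k \<Rightarrow> real^'n \<Rightarrow> ereal) \<Rightarrow> real^'n \<Rightarrow> ereal" where
  "block_sum blk gs x = (\<Sum>i\<in>UNIV. gs i (block_part blk i x))"

definition ystar :: "('x \<times> 'y \<Rightarrow> real) \<Rightarrow> ('y \<Rightarrow> ereal) \<Rightarrow> 'x \<Rightarrow> 'y" where
  "ystar f h x = (SOME y. \<forall>y'. ereal (f (x, y')) - h y' \<le> ereal (f (x, y)) - h y)"

definition s_y :: "('x \<Rightarrow> 'y \<Rightarrow> 'z \<Rightarrow> 'y::real_vector) \<Rightarrow> nat \<Rightarrow> 'x \<Rightarrow> 'y \<Rightarrow> (nat \<Rightarrow> 'z) \<Rightarrow> 'y" where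
  "s_y orc My x y \<zeta> = (1 / real My) *\<^sub>R (\<Sum>j<My. orc x y (\<zeta> j))"

definition G_y :: "('y::real_normed_vector \<Rightarrow> ereal) \<Rightarrow> real \<Rightarrow> ('x \<Rightarrow> 'y \<Rightarrow> 'z \<Rightarrow> 'y) \<Rightarrow> nat
     \<Rightarrow> 'x \<Rightarrow> 'y \<Rightarrow> (nat \<Rightarrow> 'z) \<Rightarrow> 'y" where
  "G_y h \<eta> orc My x y \<zeta> = (1 / \<eta>) *\<^sub>R (prox (scale_fun \<eta> h) (y + \<eta> *\<^sub>R s_y orc My x y \<zeta>) - y)"

end

theory Submission
  imports Defs
begin

(*
  The inequality holds sample by sample.  With
  F = f(xbar, _), four inequalities are added: the variational inequality of the proximal
  step, tested at y* = ystar f h xbar; the optimality of y* for F - h, tested at y+; the lower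
  quadratic bound on F around ybar given by the L-Lipschitz gradient, at y+; and the upper
  quadratic bound given by mu-strong concavity, at y*.  The true-gradient terms cancel and
  only the noise s - grad F(ybar) remains.
  Because prox and ystar are defined by choice, the minimisers must be shown to exist: an
  affine minorant of h turns quadratic growth into compactness of the sublevel sets of the
  closed epigraph.
*)

lemma closed_convex_fun_ereal_real:
  assumes "closed_convex_fun h" "v \<in> edom h"
  shows "ereal (real_of_ereal (h v)) = h v"
  using assms by (cases "h v") (auto simp: edom_def closed_convex_fun_def)

lemma closed_convex_fun_convex_on:
  assumes hcc: "closed_convex_fun h"
  shows "convex (edom h)" and "convex_on (edom h) (\<lambda>v. real_of_ereal (h v))"
proof -
  have epi: "convex {(v, s::real). h v \<le> ereal s}" using hcc by (simp add: closed_convex_fun_def)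
  have comb: "(1 - t) *\<^sub>R a + t *\<^sub>R b \<in> edom h \<and> real_of_ereal (h ((1 - t) *\<^sub>R a + t *\<^sub>R b))
      \<le> (1 - t) * real_of_ereal (h a) + t * real_of_ereal (h b)"
    if "a \<in> edom h" "b \<in> edom h" "0 \<le> t" "t \<le> 1" for a b t
  proof -
    have "(a, real_of_ereal (h a)) \<in> {(v, s). h v \<le> ereal s}"
      and "(b, real_of_ereal (h b)) \<in> {(v, s). h v \<le> ereal s}"
      using closed_convex_fun_ereal_real[OF hcc] that by simp_all
    then have "(1 - t) *\<^sub>R (a, real_of_ereal (h a)) + t *\<^sub>R (b, real_of_ereal (h b))
        \<in> {(v, s). h v \<le> ereal s}"
      using convexD[OF epi, of "(a, real_of_ereal (h a))" "(b, real_of_ereal (h b))" "1 - t" t] that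
      by simp
    then have "h ((1 - t) *\<^sub>R a + t *\<^sub>R b) \<le> ereal ((1 - t) * real_of_ereal (h a) + t * real_of_ereal (h b))"
      by simp
    moreover have "h ((1 - t) *\<^sub>R a + t *\<^sub>R b) \<noteq> -\<infinity>" using hcc by (simp add: closed_convex_fun_def)
    ultimately show ?thesis by (cases "h ((1 - t) *\<^sub>R a + t *\<^sub>R b)") (auto simp: edom_def)
  qed
  show "convex (edom h)" using comb by (auto simp: convex_alt)
  then show "convex_on (edom h) (\<lambda>v. real_of_ereal (h v))" using comb by (intro convex_onI) auto
qed

lemma closed_convex_fun_affine_minorant:
  fixes h :: "'a::euclidean_space \<Rightarrow> ereal"
  assumes hcc: "closed_convex_fun h"
  obtains \<alpha> \<beta> where "\<And>v. ereal (\<alpha> \<bullet> v + \<beta>) \<le> h v"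
proof -
  let ?E = "{(v, s::real). h v \<le> ereal s}"
  have "convex ?E" "closed ?E" using hcc by (simp_all add: closed_convex_fun_def)
  obtain p where p: "p \<in> edom h" using hcc by (auto simp: closed_convex_fun_def)
  define r where "r = real_of_ereal (h p)"
  have hp: "h p = ereal r" using closed_convex_fun_ereal_real[OF hcc p] by (simp add: r_def)
  then have "(p, r - 1) \<notin> ?E" by simp
  then obtain a b where sep: "a \<bullet> (p, r - 1) < b" "\<forall>z\<in>?E. b < a \<bullet> z"
    using separating_hyperplane_closed_point[OF \<open>convex ?E\<close> \<open>closed ?E\<close>] by blast
  obtain a1 a2 where a: "a = (a1, a2)" by (cases a)
  have "b < a1 \<bullet> p + a2 * r" using sep(2) hp a by auto
  moreover have "a1 \<bullet> p + a2 * (r - 1) < b" using sep(1) a by simp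
  ultimately have a2: "a2 > 0" by (simp add: algebra_simps)
  have "ereal ((- (1 / a2) *\<^sub>R a1) \<bullet> v + b / a2) \<le> h v" for v
  proof (cases "h v")
    case (real s)
    then have "b < a1 \<bullet> v + a2 * s" using sep(2) a by auto
    with a2 show ?thesis using real by (simp add: field_simps)
  qed (use hcc in \<open>auto simp: closed_convex_fun_def\<close>)
  then show thesis by (rule that)
qed

lemma norm_bound_of_quadratic_growth:
  fixes a c v :: "'a::real_inner"
  assumes \<kappa>: "\<kappa> > 0" and grow: "\<kappa> * (norm (v - c))\<^sup>2 + a \<bullet> v \<le> b"
  shows "norm (v - c) \<le> max 1 ((norm a + \<bar>b - a \<bullet> c\<bar>) / \<kappa>)"
proof (cases "norm (v - c) \<le> 1")
  case False
  let ?r = "norm (v - c)"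
  have "- (norm a * ?r) \<le> a \<bullet> (v - c)"
    using norm_cauchy_schwarz[of "- a" "v - c"] by simp
  then have "\<kappa> * ?r * ?r \<le> norm a * ?r + \<bar>b - a \<bullet> c\<bar> * ?r"
    using grow False mult_left_mono[of 1 ?r "\<bar>b - a \<bullet> c\<bar>"]
    by (simp add: inner_diff_right power2_eq_square)
  then have "?r * (\<kappa> * ?r) \<le> ?r * (norm a + \<bar>b - a \<bullet> c\<bar>)"
    by (simp add: algebra_simps)
  then have "\<kappa> * ?r \<le> norm a + \<bar>b - a \<bullet> c\<bar>"
    by (rule mult_left_le_imp_le) (use False in auto)
  with \<kappa> have "norm (v - c) \<le> (norm a + \<bar>b - a \<bullet> c\<bar>) / \<kappa>"
    by (simp add: field_simps)
  then show ?thesis by simp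
qed simp

lemma closed_convex_fun_sublevel_compact:
  fixes h :: "'a::euclidean_space \<Rightarrow> ereal" and \<phi> :: "'a \<Rightarrow> real"
  assumes hcc: "closed_convex_fun h" and \<eta>: "\<eta> > 0" and cont: "continuous_on UNIV \<phi>"
    and \<kappa>: "\<kappa> > 0"
    and grow: "\<And>v. v \<in> edom h \<Longrightarrow> \<gamma> \<bullet> v + \<delta> + \<kappa> * (norm (v - c))\<^sup>2 \<le> \<phi> v"
  shows "compact {(v, s). h v \<le> ereal s \<and> \<eta> * s + \<phi> v \<le> C}"
proof -
  define K where "K = {(v, s). h v \<le> ereal s \<and> \<eta> * s + \<phi> v \<le> C}"
  have "K = {(v, s). h v \<le> ereal s} \<inter> {z. \<eta> * snd z + \<phi> (fst z) \<le> C}"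
    by (auto simp: K_def)
  moreover have "continuous_on UNIV (\<lambda>z::'a \<times> real. \<eta> * snd z + \<phi> (fst z))"
    by (intro continuous_intros continuous_on_compose2[OF cont]) auto
  ultimately have "closed K"
    using hcc by (auto intro!: closed_Int closed_Collect_le simp: closed_convex_fun_def)
  obtain \<alpha> \<beta> where minor: "\<And>v. ereal (\<alpha> \<bullet> v + \<beta>) \<le> h v"
    using closed_convex_fun_affine_minorant[OF hcc] by blast
  define R where "R = norm c + max 1 ((norm (\<eta> *\<^sub>R \<alpha> + \<gamma>)
                        + \<bar>C - \<eta> * \<beta> - \<delta> - (\<eta> *\<^sub>R \<alpha> + \<gamma>) \<bullet> c\<bar>) / \<kappa>)"
  have "K \<subseteq> cball 0 R \<times> {\<beta> - norm \<alpha> * R .. (C + norm \<gamma> * R - \<delta>) / \<eta>}"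
  proof safe
    fix v s assume "(v, s) \<in> K"
    then have hs: "h v \<le> ereal s" and sub: "\<eta> * s + \<phi> v \<le> C" by (auto simp: K_def)
    have "v \<in> edom h" using hs by (auto simp: edom_def)
    then have \<phi>: "\<gamma> \<bullet> v + \<delta> + \<kappa> * (norm (v - c))\<^sup>2 \<le> \<phi> v" by (rule grow)
    have "\<alpha> \<bullet> v + \<beta> \<le> s" using order_trans[OF minor hs] by simp
    then have "\<eta> * (\<alpha> \<bullet> v + \<beta>) \<le> \<eta> * s" using \<eta> by simp
    then have "\<kappa> * (norm (v - c))\<^sup>2 + (\<eta> *\<^sub>R \<alpha> + \<gamma>) \<bullet> v \<le> C - \<eta> * \<beta> - \<delta>"
      using sub \<phi> by (simp add: inner_add_left algebra_simps)
    then have "norm (v - c) \<le> R - norm c"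
      unfolding R_def using norm_bound_of_quadratic_growth[OF \<kappa>] by simp
    then show nv: "v \<in> cball 0 R" using norm_triangle_sub[of v c] by simp
    have "- (norm x * R) \<le> x \<bullet> v" for x
      using Cauchy_Schwarz_ineq2[of x v] mult_left_mono[of "norm v" R "norm x"] nv
      by (simp add: abs_le_iff)
    then have "- (norm \<alpha> * R) \<le> \<alpha> \<bullet> v" and "- (norm \<gamma> * R) \<le> \<gamma> \<bullet> v" by blast+
    then have "\<beta> - norm \<alpha> * R \<le> s" using \<open>\<alpha> \<bullet> v + \<beta> \<le> s\<close> by simp
    have "\<eta> * s \<le> C + norm \<gamma> * R - \<delta>"
      using sub \<phi> \<open>- (norm \<gamma> * R) \<le> \<gamma> \<bullet> v\<close> \<kappa> by (smt (verit) zero_le_power2 mult_nonneg_nonneg)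
    with \<eta> \<open>\<beta> - norm \<alpha> * R \<le> s\<close>
    show "s \<in> {\<beta> - norm \<alpha> * R .. (C + norm \<gamma> * R - \<delta>) / \<eta>}" by (simp add: field_simps)
  qed
  moreover have "bounded (cball (0::'a) R \<times> {\<beta> - norm \<alpha> * R .. (C + norm \<gamma> * R - \<delta>) / \<eta>})"
    by (intro bounded_Times bounded_cball bounded_closed_interval)
  ultimately have "bounded K" by (rule bounded_subset[rotated])
  with \<open>closed K\<close> show ?thesis by (simp add: compact_eq_bounded_closed K_def)
qed

lemma closed_convex_fun_add_coercive_attains_min:
  fixes h :: "'a::euclidean_space \<Rightarrow> ereal" and \<phi> :: "'a \<Rightarrow> real"
  assumes hcc: "closed_convex_fun h" and \<eta>: "\<eta> > 0" and cont: "continuous_on UNIV \<phi>"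
    and \<kappa>: "\<kappa> > 0"
    and grow: "\<And>v. v \<in> edom h \<Longrightarrow> \<gamma> \<bullet> v + \<delta> + \<kappa> * (norm (v - c))\<^sup>2 \<le> \<phi> v"
  shows "\<exists>v\<in>edom h. \<forall>w\<in>edom h.
           \<eta> * real_of_ereal (h v) + \<phi> v \<le> \<eta> * real_of_ereal (h w) + \<phi> w"
proof -
  obtain p where p: "p \<in> edom h" using hcc by (auto simp: closed_convex_fun_def)
  define C where "C = \<eta> * real_of_ereal (h p) + \<phi> p"
  define K where "K = {(v, s). h v \<le> ereal s \<and> \<eta> * s + \<phi> v \<le> C}"
  define \<Phi> where "\<Phi> z = \<eta> * snd z + \<phi> (fst z)" for z :: "'a \<times> real"
  have "compact K"
    unfolding K_def by (rule closed_convex_fun_sublevel_compact[OF hcc \<eta> cont \<kappa> grow])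
  moreover have "continuous_on K \<Phi>"
    unfolding \<Phi>_def by (intro continuous_intros continuous_on_compose2[OF cont]) auto
  moreover have "(p, real_of_ereal (h p)) \<in> K"
    using closed_convex_fun_ereal_real[OF hcc p] by (simp add: K_def C_def)
  then have "K \<noteq> {}" by (metis empty_iff)
  ultimately obtain v s where "(v, s) \<in> K" and vs_min: "\<And>z. z \<in> K \<Longrightarrow> \<Phi> (v, s) \<le> \<Phi> z"
    using continuous_attains_inf by (metis surj_pair)
  then have hs: "h v \<le> ereal s" and "\<eta> * s + \<phi> v \<le> C" by (auto simp: K_def)
  then have v: "v \<in> edom h" by (auto simp: edom_def)
  with hs have "ereal (real_of_ereal (h v)) \<le> ereal s"
    using closed_convex_fun_ereal_real[OF hcc v] by simp
  then have "\<eta> * real_of_ereal (h v) + \<phi> v \<le> \<Phi> (v, s)" using \<eta> by (simp add: \<Phi>_def)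
  moreover have "\<Phi> (v, s) \<le> \<eta> * real_of_ereal (h w) + \<phi> w" if w: "w \<in> edom h" for w
  proof (cases "(w, real_of_ereal (h w)) \<in> K")
    case True
    then show ?thesis using vs_min by (fastforce simp: \<Phi>_def)
  next
    case False
    then show ?thesis
      using closed_convex_fun_ereal_real[OF hcc w] \<open>\<eta> * s + \<phi> v \<le> C\<close> by (auto simp: K_def \<Phi>_def)
  qed
  ultimately show ?thesis using v by force
qed

lemma prox_minimizes:
  fixes h :: "'a::euclidean_space \<Rightarrow> ereal" and u :: 'a
  assumes hcc: "closed_convex_fun h" and \<eta>: "\<eta> > 0"
  defines "p \<equiv> prox (scale_fun \<eta> h) u"
  shows "p \<in> edom h"
    and "\<And>w. w \<in> edom h \<Longrightarrow> \<eta> * real_of_ereal (h p) + (norm (p - u))\<^sup>2 / 2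
                              \<le> \<eta> * real_of_ereal (h w) + (norm (w - u))\<^sup>2 / 2"
proof -
  let ?J = "\<lambda>v. scale_fun \<eta> h v + ereal ((norm (v - u))\<^sup>2 / 2)"
  have real_J: "?J v = ereal (\<eta> * real_of_ereal (h v) + (norm (v - u))\<^sup>2 / 2)"
    if "v \<in> edom h" for v
    using closed_convex_fun_ereal_real[OF hcc that]
    by (metis plus_ereal.simps(1) scale_fun_def times_ereal.simps(1))
  have infinite_J: "?J v = \<infinity>" if "v \<notin> edom h" for v
    using that \<eta> by (simp add: scale_fun_def edom_def)
  have cont: "continuous_on UNIV (\<lambda>v. (norm (v - u))\<^sup>2 / 2)" by (intro continuous_intros) auto
  obtain v where "v \<in> edom h" and "\<forall>w\<in>edom h. \<eta> * real_of_ereal (h v) + (norm (v - u))\<^sup>2 / 2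
                                      \<le> \<eta> * real_of_ereal (h w) + (norm (w - u))\<^sup>2 / 2"
    using closed_convex_fun_add_coercive_attains_min[OF hcc \<eta> cont, of "1/2" 0 0 u] by auto
  then have "?J v \<le> ?J w" for w
    by (cases "w \<in> edom h") (simp_all add: real_J infinite_J)
  then have "\<exists>v. \<forall>w. ?J v \<le> ?J w" by blast
  then have p_min: "\<forall>w. ?J p \<le> ?J w" unfolding p_def prox_def by (rule someI_ex)
  show p: "p \<in> edom h"
  proof (rule ccontr)
    assume "p \<notin> edom h"
    then show False using p_min[rule_format, of v] \<open>v \<in> edom h\<close> by (simp add: real_J infinite_J)
  qed
  show "\<eta> * real_of_ereal (h p) + (norm (p - u))\<^sup>2 / 2 \<le> \<eta> * real_of_ereal (h w) + (norm (w - u))\<^sup>2 / 2"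
    if "w \<in> edom h" for w
    using p_min[rule_format, of w] by (simp add: real_J p that)
qed

lemma prox_variational_inequality:
  fixes h :: "'a::euclidean_space \<Rightarrow> ereal" and u :: 'a
  assumes hcc: "closed_convex_fun h" and \<eta>: "\<eta> > 0" and w: "w \<in> edom h"
  defines "p \<equiv> prox (scale_fun \<eta> h) u"
  shows "\<eta> * real_of_ereal (h p) + (u - p) \<bullet> (w - p) \<le> \<eta> * real_of_ereal (h w)"
proof -
  let ?h = "\<lambda>v. real_of_ereal (h v)"
  let ?D = "\<eta> * (?h w - ?h p) + (p - u) \<bullet> (w - p)"
  note p = prox_minimizes[OF hcc \<eta>, where u = u, folded p_def]
  have "0 \<le> ?D + t * ((norm (w - p))\<^sup>2 / 2)" if t: "0 < t" "t \<le> 1" for t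
  proof -
    let ?pt = "(1 - t) *\<^sub>R p + t *\<^sub>R w"
    have pt: "?pt \<in> edom h"
      using convexD[OF closed_convex_fun_convex_on(1)[OF hcc] p(1) w, of "1 - t" t] t by simp
    have "\<eta> * ?h p + (norm (p - u))\<^sup>2 / 2 \<le> \<eta> * ?h ?pt + (norm (?pt - u))\<^sup>2 / 2"
      using p(2)[OF pt] .
    also have "\<dots> \<le> \<eta> * ((1 - t) * ?h p + t * ?h w) + (norm (?pt - u))\<^sup>2 / 2"
      using convex_onD[OF closed_convex_fun_convex_on(2)[OF hcc], of t p w] p(1) w t \<eta> by simp
    also have "(norm (?pt - u))\<^sup>2
        = (norm (p - u))\<^sup>2 + 2 * t * ((p - u) \<bullet> (w - p)) + t\<^sup>2 * (norm (w - p))\<^sup>2"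
    proof -
      have "?pt - u = (p - u) + t *\<^sub>R (w - p)" by (simp add: algebra_simps)
      then show ?thesis
        unfolding power2_norm_eq_inner
        by (simp add: inner_add_left inner_add_right inner_commute algebra_simps power2_eq_square)
    qed
    finally have "0 \<le> t * (?D + t * ((norm (w - p))\<^sup>2 / 2))"
      by (simp add: field_simps power2_eq_square)
    with t show ?thesis by (simp add: zero_le_mult_iff)
  qed
  then have "0 \<le> ?D"
    by (intro tendsto_lowerbound[where F = "at_right 0" and f = "\<lambda>t. ?D + t * ((norm (w - p))\<^sup>2 / 2)"])
       (auto intro!: tendsto_eq_intros simp: eventually_at_right_field intro: exI[of _ 1])
  then show ?thesis by (simp add: algebra_simps inner_diff_left inner_diff_right inner_commute)
qed

lemma has_derivative_second_argument:
  fixes f :: "'a::real_inner \<times> 'b::real_inner \<Rightarrow> real"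
  assumes "(f has_derivative (\<lambda>v. g \<bullet> v)) (at (x, y))"
  shows "((\<lambda>y. f (x, y)) has_derivative (\<lambda>v. snd g \<bullet> v)) (at y)"
proof -
  have "((\<lambda>y. (x, y)) has_derivative (\<lambda>v. (0, v))) (at y)"
    by (auto intro!: derivative_eq_intros)
  from diff_chain_at[OF this assms] show ?thesis
    by (simp add: comp_def inner_Pair_0)
qed

lemma has_real_derivative_along_line:
  fixes F :: "'a::real_inner \<Rightarrow> real"
  assumes "(F has_derivative (\<lambda>v. g \<bullet> v)) (at (a + t *\<^sub>R d))"
  shows "((\<lambda>s. F (a + s *\<^sub>R d)) has_real_derivative g \<bullet> d) (at t)"
proof -
  have "((\<lambda>s. a + s *\<^sub>R d) has_derivative (\<lambda>s. s *\<^sub>R d)) (at t)"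
    by (auto intro!: derivative_eq_intros)
  from diff_chain_at[OF this assms] show ?thesis
    by (simp add: has_field_derivative_def comp_def mult_commute_abs)
qed

lemma strongly_concave_imp_convex_on_uminus:
  assumes "strongly_concave_on \<mu> S F" "\<mu> \<ge> 0"
  shows "convex_on S (\<lambda>y. - F y)"
proof (rule convex_onI)
  show "convex S" using assms(1) by (simp add: strongly_concave_on_def)
  fix t :: real and x y assume t: "0 < t" "t < 1" and "x \<in> S" "y \<in> S"
  then have "t * F y + (1 - t) * F x + \<mu> / 2 * t * (1 - t) * (norm (y - x))\<^sup>2
      \<le> F (t *\<^sub>R y + (1 - t) *\<^sub>R x)"
    using assms(1) unfolding strongly_concave_on_def by simp
  moreover have "0 \<le> \<mu> / 2 * t * (1 - t) * (norm (y - x))\<^sup>2"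
    using assms(2) t by simp
  ultimately show "- F ((1 - t) *\<^sub>R x + t *\<^sub>R y) \<le> (1 - t) * - F x + t * - F y"
    by (simp add: add.commute)
qed

lemma strongly_concave_first_order:
  fixes F :: "'a::real_inner \<Rightarrow> real"
  assumes sc: "strongly_concave_on \<mu> UNIV F" and der: "(F has_derivative (\<lambda>v. g \<bullet> v)) (at a)"
  shows "F y \<le> F a + g \<bullet> (y - a) - \<mu> / 2 * (norm (y - a))\<^sup>2"
proof -
  define d where "d = y - a"
  let ?q = "\<lambda>t. (F (a + t *\<^sub>R d) - F (a + 0 *\<^sub>R d)) / (t - 0)"
  have "((\<lambda>s. F (a + s *\<^sub>R d)) has_real_derivative g \<bullet> d) (at 0 within {0<..})"
    using has_real_derivative_along_line[of F g a 0 d] der by (simp add: has_field_derivative_at_within)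
  then have "(?q \<longlongrightarrow> g \<bullet> d) (at_right 0)"
    unfolding has_field_derivative_iff .
  moreover have "((\<lambda>t. F y - F a + \<mu> / 2 * (1 - t) * (norm d)\<^sup>2)
      \<longlongrightarrow> F y - F a + \<mu> / 2 * (norm d)\<^sup>2) (at_right 0)"
    by (auto intro!: tendsto_eq_intros)
  moreover have "\<forall>\<^sub>F t in at_right 0. F y - F a + \<mu> / 2 * (1 - t) * (norm d)\<^sup>2 \<le> ?q t"
    unfolding eventually_at_right_field
  proof (intro exI[of _ 1] conjI allI impI)
    fix t :: real assume t: "0 < t" "t < 1"
    have "t * F y + (1 - t) * F a + \<mu> / 2 * t * (1 - t) * (norm d)\<^sup>2 \<le> F (t *\<^sub>R y + (1 - t) *\<^sub>R a)"
      using sc t by (auto simp: strongly_concave_on_def d_def)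
    moreover have "t *\<^sub>R y + (1 - t) *\<^sub>R a = a + t *\<^sub>R d" by (simp add: d_def algebra_simps)
    ultimately have "t * (F y - F a + \<mu> / 2 * (1 - t) * (norm d)\<^sup>2) \<le> F (a + t *\<^sub>R d) - F a"
      by (simp add: algebra_simps)
    with t show "F y - F a + \<mu> / 2 * (1 - t) * (norm d)\<^sup>2 \<le> ?q t"
      by (simp add: field_simps)
  qed simp
  ultimately have "F y - F a + \<mu> / 2 * (norm d)\<^sup>2 \<le> g \<bullet> d"
    by (intro tendsto_le[of "at_right 0"]) auto
  then show ?thesis by (simp add: d_def)
qed

lemma DERIV_lipschitz_lower_bound:
  fixes G g :: "real \<Rightarrow> real"
  assumes der: "\<And>s. 0 \<le> s \<Longrightarrow> s \<le> 1 \<Longrightarrow> (G has_real_derivative g s) (at s)"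
    and lip: "\<And>s. 0 \<le> s \<Longrightarrow> s \<le> 1 \<Longrightarrow> g 0 - g s \<le> L * s"
  shows "G 0 + g 0 - L / 2 \<le> G 1"
proof -
  define \<psi> where "\<psi> s = G s - s * g 0 + L / 2 * s\<^sup>2" for s
  have \<psi>': "(\<psi> has_real_derivative g s - g 0 + L * s) (at s)" if "0 \<le> s" "s \<le> 1" for s
    unfolding \<psi>_def using der[OF that] by (auto intro!: derivative_eq_intros)
  have "\<psi> 0 \<le> \<psi> 1"
  proof (rule DERIV_nonneg_imp_increasing_open[of 0 1])
    show "continuous_on {0..1} \<psi>"
      using \<psi>' by (intro DERIV_continuous_on[of _ _ "\<lambda>s. g s - g 0 + L * s"])
        (auto intro: has_field_derivative_at_within)
    fix s :: real assume s: "0 < s" "s < 1"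
    then have "(\<psi> has_real_derivative g s - g 0 + L * s) (at s)" using \<psi>' by simp
    moreover have "0 \<le> g s - g 0 + L * s" using lip[of s] s by simp
    ultimately show "\<exists>y. (\<psi> has_real_derivative y) (at s) \<and> 0 \<le> y" by blast
  qed simp
  then show ?thesis by (simp add: \<psi>_def)
qed

lemma lipschitz_gradient_lower_bound:
  fixes F :: "'a::real_inner \<Rightarrow> real"
  assumes S: "convex S" "a \<in> S" "b \<in> S"
    and der: "\<And>y. y \<in> S \<Longrightarrow> (F has_derivative (\<lambda>v. DF y \<bullet> v)) (at y)"
    and lip: "\<And>y. y \<in> S \<Longrightarrow> norm (DF y - DF a) \<le> L * norm (y - a)"
  shows "F a + DF a \<bullet> (b - a) - L / 2 * (norm (b - a))\<^sup>2 \<le> F b"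
proof -
  define d where "d = b - a"
  have seg: "a + s *\<^sub>R d \<in> S" if "0 \<le> s" "s \<le> 1" for s
    using convexD[OF S(1) S(2,3), of "1 - s" s] that by (simp add: d_def algebra_simps)
  have "F (a + 0 *\<^sub>R d) + DF (a + 0 *\<^sub>R d) \<bullet> d - L * (norm d)\<^sup>2 / 2 \<le> F (a + 1 *\<^sub>R d)"
  proof (rule DERIV_lipschitz_lower_bound[where G = "\<lambda>s. F (a + s *\<^sub>R d)"])
    fix s :: real assume s: "0 \<le> s" "s \<le> 1"
    show "((\<lambda>s. F (a + s *\<^sub>R d)) has_real_derivative DF (a + s *\<^sub>R d) \<bullet> d) (at s)"
      by (rule has_real_derivative_along_line[OF der[OF seg[OF s]]])
    have "DF (a + 0 *\<^sub>R d) \<bullet> d - DF (a + s *\<^sub>R d) \<bullet> d \<le> norm (DF (a + s *\<^sub>R d) - DF a) * norm d"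
      using norm_cauchy_schwarz[of "DF a - DF (a + s *\<^sub>R d)" d]
      by (simp add: inner_diff_left norm_minus_commute)
    also have "\<dots> \<le> L * (s * norm d) * norm d"
      using lip[OF seg[OF s]] s by (intro mult_right_mono) auto
    finally show "DF (a + 0 *\<^sub>R d) \<bullet> d - DF (a + s *\<^sub>R d) \<bullet> d \<le> L * (norm d)\<^sup>2 * s"
      by (simp add: power2_eq_square algebra_simps)
  qed
  then show ?thesis by (simp add: d_def)
qed

lemma ystar_maximizes:
  fixes h :: "'y::euclidean_space \<Rightarrow> ereal" and f :: "'x \<times> 'y \<Rightarrow> real"
  assumes hcc: "closed_convex_fun h" and \<mu>: "\<mu> > 0"
    and sc: "strongly_concave_on \<mu> UNIV (\<lambda>y. f (x, y))"
    and der: "((\<lambda>y. f (x, y)) has_derivative (\<lambda>v. g \<bullet> v)) (at a)"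
  defines "ys \<equiv> ystar f h x"
  shows "ys \<in> edom h"
    and "\<And>y. y \<in> edom h \<Longrightarrow> f (x, y) - real_of_ereal (h y) \<le> f (x, ys) - real_of_ereal (h ys)"
proof -
  let ?F = "\<lambda>y. f (x, y)"
  let ?J = "\<lambda>y. ereal (f (x, y)) - h y"
  have real_J: "?J v = ereal (?F v - real_of_ereal (h v))" if "v \<in> edom h" for v
  proof -
    have "?J v = ereal (?F v) - ereal (real_of_ereal (h v))"
      by (simp add: closed_convex_fun_ereal_real[OF hcc that])
    then show ?thesis by simp
  qed
  have cont: "continuous_on UNIV (\<lambda>y. - ?F y)"
    using strongly_concave_imp_convex_on_uminus[OF sc] \<mu> by (simp add: convex_on_continuous)
  have grow: "(- g) \<bullet> v + (g \<bullet> a - ?F a) + \<mu> / 2 * (norm (v - a))\<^sup>2 \<le> - ?F v" for v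
    using strongly_concave_first_order[OF sc der, of v] by (simp add: inner_diff_right)
  have "\<mu> / 2 > 0" using \<mu> by simp
  from closed_convex_fun_add_coercive_attains_min[OF hcc zero_less_one cont this grow]
  obtain v where v: "v \<in> edom h"
    and v_max: "\<forall>w\<in>edom h. 1 * real_of_ereal (h v) + - ?F v \<le> 1 * real_of_ereal (h w) + - ?F w"
    by blast
  have "?J w \<le> ?J v" for w
    using v_max v by (cases "w \<in> edom h") (auto simp: real_J edom_def)
  then have "\<exists>v. \<forall>w. ?J w \<le> ?J v" by blast
  then have ys_max: "\<forall>w. ?J w \<le> ?J ys" unfolding ys_def ystar_def by (rule someI_ex)
  show ys: "ys \<in> edom h"
  proof (rule ccontr)
    assume "ys \<notin> edom h"
    then show False using ys_max[rule_format, of v] v by (simp add: real_J edom_def)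
  qed
  show "?F y - real_of_ereal (h y) \<le> ?F ys - real_of_ereal (h ys)" if "y \<in> edom h" for y
    using ys_max[rule_format, of y] ys that by (simp add: real_J)
qed

lemma prox_gradient_step_inequality:
  fixes h :: "'y::euclidean_space \<Rightarrow> ereal" and f :: "'x \<times> 'y \<Rightarrow> real" and DF :: "'y \<Rightarrow> 'y"
    and ybar s :: 'y
  assumes hcc: "closed_convex_fun h" and \<mu>: "\<mu> > 0" and \<eta>: "\<eta> > 0" and ybar: "ybar \<in> edom h"
    and sc: "strongly_concave_on \<mu> UNIV (\<lambda>y. f (x, y))"
    and der: "\<And>y. y \<in> edom h \<Longrightarrow> ((\<lambda>y. f (x, y)) has_derivative (\<lambda>v. DF y \<bullet> v)) (at y)"
    and lip: "\<And>y. y \<in> edom h \<Longrightarrow> norm (DF y - DF ybar) \<le> L * norm (y - ybar)"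
  defines "yp \<equiv> prox (scale_fun \<eta> h) (ybar + \<eta> *\<^sub>R s)"
    and "G \<equiv> (1 / \<eta>) *\<^sub>R (prox (scale_fun \<eta> h) (ybar + \<eta> *\<^sub>R s) - ybar)"
    and "ys \<equiv> ystar f h x"
  shows "2 * \<eta> * (G \<bullet> (ybar - ys)) + \<eta>\<^sup>2 * (norm G)\<^sup>2
         \<le> - \<eta> * \<mu> * (norm (ybar - ys))\<^sup>2 - \<eta>\<^sup>2 * (1 - L * \<eta>) * (norm G)\<^sup>2
           + 2 * \<eta> * ((s - DF ybar) \<bullet> (yp - ys))"
proof -
  let ?F = "\<lambda>y. f (x, y)" and ?h = "\<lambda>y. real_of_ereal (h y)"
  have yp: "yp \<in> edom h" unfolding yp_def by (rule prox_minimizes(1)[OF hcc \<eta>])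
  have ys: "ys \<in> edom h" and ys_max: "?F yp - ?h yp \<le> ?F ys - ?h ys"
    using ystar_maximizes[OF hcc \<mu> sc der[OF ybar]] yp unfolding ys_def by auto
  have yp_eq: "yp = ybar + \<eta> *\<^sub>R G" using \<eta> by (simp add: G_def yp_def)
  have "\<eta> * ?h yp + (ybar + \<eta> *\<^sub>R s - yp) \<bullet> (ys - yp) \<le> \<eta> * ?h ys"
    unfolding yp_def by (rule prox_variational_inequality[OF hcc \<eta> ys])
  moreover have "ybar + \<eta> *\<^sub>R s - yp = \<eta> *\<^sub>R (s - G)" by (simp add: yp_eq algebra_simps)
  ultimately have "\<eta> * (?h yp + (s - G) \<bullet> (ys - yp)) \<le> \<eta> * ?h ys"
    by (simp add: distrib_left)
  then have prox_vi: "?h yp + (s - G) \<bullet> (ys - yp) \<le> ?h ys"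
    using \<eta> by simp
  have descent: "?F ybar + DF ybar \<bullet> (yp - ybar) - L / 2 * (norm (yp - ybar))\<^sup>2 \<le> ?F yp"
    by (rule lipschitz_gradient_lower_bound[OF closed_convex_fun_convex_on(1)[OF hcc] ybar yp der lip])
  have first_order: "?F ys \<le> ?F ybar + DF ybar \<bullet> (ys - ybar) - \<mu> / 2 * (norm (ys - ybar))\<^sup>2"
    by (rule strongly_concave_first_order[OF sc der[OF ybar]])
  have "(norm (yp - ybar))\<^sup>2 = \<eta>\<^sup>2 * (norm G)\<^sup>2"
    by (simp add: yp_eq power_mult_distrib)
  moreover have "G \<bullet> (ys - yp) = - (G \<bullet> (ybar - ys)) - \<eta> * (norm G)\<^sup>2"
    by (simp add: yp_eq inner_diff_right inner_add_right power2_norm_eq_inner)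
  moreover have "norm (ys - ybar) = norm (ybar - ys)" by (rule norm_minus_commute)
  ultimately have "0 \<le> (s - DF ybar) \<bullet> (yp - ys) - G \<bullet> (ybar - ys) - \<eta> * (norm G)\<^sup>2
      - \<mu> / 2 * (norm (ybar - ys))\<^sup>2 + L / 2 * (\<eta>\<^sup>2 * (norm G)\<^sup>2)"
    using ys_max prox_vi descent first_order by (simp add: inner_diff_left inner_diff_right)
  then have "0 \<le> 2 * \<eta> * ((s - DF ybar) \<bullet> (yp - ys) - G \<bullet> (ybar - ys) - \<eta> * (norm G)\<^sup>2
      - \<mu> / 2 * (norm (ybar - ys))\<^sup>2 + L / 2 * (\<eta>\<^sup>2 * (norm G)\<^sup>2))"
    using \<eta> by simp
  then show ?thesis by (simp add: algebra_simps power2_eq_square)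
qed

theorem corollary1:
  fixes blk :: "'n::finite \<Rightarrow> 'k::finite"
    and gs :: "'k \<Rightarrow> real^'n \<Rightarrow> ereal"
    and h :: "'y::euclidean_space \<Rightarrow> ereal"
    and f :: "(real^'n) \<times> 'y \<Rightarrow> real"
    and gradf :: "(real^'n) \<times> 'y \<Rightarrow> (real^'n) \<times> 'y"
    and U :: "((real^'n) \<times> 'y) set"
    and L \<mu> \<sigma>y \<eta>y :: real
    and D :: "'z measure"
    and orc :: "real^'n \<Rightarrow> 'y \<Rightarrow> 'z \<Rightarrow> 'y"
    and My :: nat and \<zeta> :: "nat \<Rightarrow> 'z"
    and xbar :: "real^'n" and ybar :: 'y
  assumes mu_pos: "\<mu> > 0"
    (* Assumption A *)
    and g_cc: "\<And>i. closed_convex_fun (gs i)"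
    and h_cc: "closed_convex_fun h"
    and U_open: "open U"
    and U_sup: "edom (block_sum blk gs) \<times> edom h \<subseteq> U"
    and f_diff: "\<And>z. z \<in> U \<Longrightarrow> (f has_derivative (\<lambda>v. gradf z \<bullet> v)) (at z)"
    and grad_lip: "\<And>z z'. z \<in> U \<Longrightarrow> z' \<in> U \<Longrightarrow> norm (gradf z - gradf z') \<le> L * norm (z - z')"
    and f_sc: "\<And>x. x \<in> edom (block_sum blk gs) \<Longrightarrow> strongly_concave_on \<mu> UNIV (\<lambda>y. f (x, y))"
    (* Assumption B *)
    and D_prob: "prob_space D"
    and orc_meas: "\<And>x y. x \<in> edom (block_sum blk gs) \<Longrightarrow> y \<in> edom h \<Longrightarrow>
                     orc x y \<in> borel_measurable D"
    and orc_unbiased: "\<And>x y. x \<in> edom (block_sum blk gs) \<Longrightarrow> y \<in> edom h \<Longrightarrow>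
                     integrable D (orc x y) \<and> (\<integral>w. orc x y w \<partial>D) = snd (gradf (x, y))"
    and orc_var: "\<And>x y. x \<in> edom (block_sum blk gs) \<Longrightarrow> y \<in> edom h \<Longrightarrow>
                     integrable D (\<lambda>w. (norm (orc x y w - snd (gradf (x, y))))\<^sup>2) \<and>
                     (\<integral>w. (norm (orc x y w - snd (gradf (x, y))))\<^sup>2 \<partial>D) \<le> \<sigma>y\<^sup>2"
    and My_pos: "My \<ge> 1"
    and \<zeta>_space: "\<And>j. j < My \<Longrightarrow> \<zeta> j \<in> space D"
    (* the point and step size *)
    and xbar_dom: "xbar \<in> edom (block_sum blk gs)"
    and ybar_dom: "ybar \<in> edom h"
    and eta_pos: "\<eta>y > 0"
  shows "let G = G_y h \<eta>y orc My xbar ybar \<zeta>;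
             s = s_y orc My xbar ybar \<zeta>;
             ys = ystar f h xbar;
             yplus = prox (scale_fun \<eta>y h) (ybar + \<eta>y *\<^sub>R s)
         in 2 * \<eta>y * (G \<bullet> (ybar - ys)) + \<eta>y\<^sup>2 * (norm G)\<^sup>2
            \<le> - \<eta>y * \<mu> * (norm (ybar - ys))\<^sup>2 - \<eta>y\<^sup>2 * (1 - L * \<eta>y) * (norm G)\<^sup>2
              + 2 * \<eta>y * ((s - snd (gradf (xbar, ybar))) \<bullet> (yplus - ys))"
proof -
  have in_U: "(xbar, y) \<in> U" if "y \<in> edom h" for y
    using U_sup xbar_dom that by auto
  have partial_der: "((\<lambda>y. f (xbar, y)) has_derivative (\<lambda>v. snd (gradf (xbar, y)) \<bullet> v)) (at y)"
    if "y \<in> edom h" for y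
    by (rule has_derivative_second_argument[OF f_diff[OF in_U[OF that]]])
  have partial_lip: "norm (snd (gradf (xbar, y)) - snd (gradf (xbar, ybar))) \<le> L * norm (y - ybar)"
    if "y \<in> edom h" for y
  proof -
    have "norm (snd (gradf (xbar, y)) - snd (gradf (xbar, ybar)))
        \<le> norm (gradf (xbar, y) - gradf (xbar, ybar))"
      by (metis norm_snd_le prod.collapse snd_diff)
    also have "\<dots> \<le> L * norm ((xbar, y) - (xbar, ybar))"
      by (rule grad_lip[OF in_U[OF that] in_U[OF ybar_dom]])
    finally show ?thesis by simp
  qed
  show ?thesis
    using prox_gradient_step_inequality[OF h_cc mu_pos eta_pos ybar_dom f_sc[OF xbar_dom]
            partial_der partial_lip, where s = "s_y orc My xbar ybar \<zeta>"]
    unfolding G_y_def Let_def .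
qed

end
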